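(* Let $\bar z$ be a feasible point of the MPCC $$\min f(z)\ \text{ s.t. }\ g(z)\le 0,\ h(z)=0,\ 0\le G(z)\perp H(z)\ge 0,$$ where $f:\mathbb{R}^n\to\mathbb{R}$, $g:\mathbb{R}^n\to\mathbb{R}^{n_g}$, $h:\mathbb{R}^n\to\mathbb{R}^{n_h}$, $G,H:\mathbb{R}^n\to\mathbb{R}^m$ are differentiable. If $\bar z$ is piecewise M-stationary, then $\bar z$ is B-stationary.
   Context: The complementarity constraint $0\le G(z)\perp H(z)\ge 0$ means $G(z)\ge0$, $H(z)\ge 0$, $G_i(z)H_i(z)=0$ for all $i$. At a feasible $\bar z$ define $\alpha(\bar z)=\{i: G_i(\bar z)=0<H_i(\bar z)\}$, $\gamma(\bar z)=\{i: G_i(\bar z)>0=H_i(\bar z)\}$, $\beta(\bar z)=\{i: G_i(\bar z)=0=H_i(\bar z)\}$. Let $\mathcal T(\bar z)$ be the (Bouligand) tangent cone of the MPCC feasible set at $\bar z$. $\bar z$ is B-stationary if $\nabla f(\bar z)^Td\ge 0$ for all $d\in\mathcal T(\bar z)$. Piecewise M-stationarity: let $\mathcal P(\beta(\bar z))$ be the set of all pairs $(\beta_1,\beta_2)$ with $\beta_1\cup\beta_2=\beta(\bar z)$, $\beta_1\cap\beta_2=\emptyset$. $\bar z$ is piecewise M-stationary if for every $(\beta_1,\beta_2)\in\mathcal P(\beta(\bar z))$ there exist multipliers $\bar\lambda=(\bar\lambda^g,\bar\lambda^h,\bar\lambda^G,\bar\lambda^H)$ (possibly depending on the partition) with $$0=\nabla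 f(\bar z)+\sum_{i=1}^{n_g}\bar\lambda^g_i\nabla g_i(\bar z)+\sum_{i=1}^{n_h}\bar\lambda^h_i\nabla h_i(\bar z)-\sum_{i\in\alpha(\bar z)\cup\beta(\bar z)}\bar\lambda^G_i\nabla G_i(\bar z)-\sum_{i\in\gamma(\bar z)\cup\beta(\bar z)}\bar\lambda^H_i\nabla H_i(\bar z),$$ $\bar\lambda^g_i\ge0$ and $\bar\lambda^g_ig_i(\bar z)=0$ for all $i$; $\bar\lambda^H_i\ge 0$ for $i\in\beta_1$; $\bar\lambda^G_i\ge0$ for $i\in\beta_2$; and for every $i\in\beta(\bar z)$ either $\bar\lambda^G_i,\bar\lambda^H_i\ge 0$ or $\bar\lambda^G_i\bar\lambda^H_i=0$. *)

theory Defs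
  imports "HOL-Analysis.Analysis"
begin

text \<open>Gradient of a (differentiable) real-valued function on a Euclidean space:
  the vector representing the Frechet derivative, so that
  grad f z \<bullet> d = frechet_derivative f (at z) d.\<close>
definition grad :: "('a::euclidean_space \<Rightarrow> real) \<Rightarrow> 'a \<Rightarrow> 'a" where
  "grad f z = (\<Sum>b\<in>Basis. frechet_derivative f (at z) b *\<^sub>R b)"

definition mpcc_feasible ::
  "(nat \<Rightarrow> 'a \<Rightarrow> real) \<Rightarrow> (nat \<Rightarrow> 'a \<Rightarrow> real) \<Rightarrow> (nat \<Rightarrow> 'a \<Rightarrow> real) \<Rightarrow> (nat \<Rightarrow> 'a \<Rightarrow> real)
   \<Rightarrow> nat \<Rightarrow> nat \<Rightarrow> nat \<Rightarrow> 'a set" where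
  "mpcc_feasible g h G H ng nh m =
     {z. (\<forall>i<ng. g i z \<le> 0) \<and> (\<forall>i<nh. h i z = 0) \<and>
         (\<forall>i<m. G i z \<ge> 0 \<and> H i z \<ge> 0 \<and> G i z * H i z = 0)}"

definition tangent_cone :: "'a::real_normed_vector set \<Rightarrow> 'a \<Rightarrow> 'a set" where
  "tangent_cone S z = {d. \<exists>zk t. (\<forall>k. zk k \<in> S) \<and> zk \<longlonglongrightarrow> z \<and>
       (\<forall>k. t k > 0) \<and> t \<longlonglongrightarrow> 0 \<and> (\<lambda>k. (1 / t k) *\<^sub>R (zk k - z)) \<longlonglongrightarrow> d}"

definition idx_alpha :: "(nat \<Rightarrow> 'a \<Rightarrow> real) \<Rightarrow> (nat \<Rightarrow> 'a \<Rightarrow> real) \<Rightarrow> nat \<Rightarrow> 'a \<Rightarrow> nat set" where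
  "idx_alpha G H m z = {i. i < m \<and> G i z = 0 \<and> 0 < H i z}"

definition idx_gamma :: "(nat \<Rightarrow> 'a \<Rightarrow> real) \<Rightarrow> (nat \<Rightarrow> 'a \<Rightarrow> real) \<Rightarrow> nat \<Rightarrow> 'a \<Rightarrow> nat set" where
  "idx_gamma G H m z = {i. i < m \<and> G i z > 0 \<and> H i z = 0}"

definition idx_beta :: "(nat \<Rightarrow> 'a \<Rightarrow> real) \<Rightarrow> (nat \<Rightarrow> 'a \<Rightarrow> real) \<Rightarrow> nat \<Rightarrow> 'a \<Rightarrow> nat set" where
  "idx_beta G H m z = {i. i < m \<and> G i z = 0 \<and> H i z = 0}"

definition B_stationary ::
  "('a::euclidean_space \<Rightarrow> real) \<Rightarrow> (nat \<Rightarrow> 'a \<Rightarrow> real) \<Rightarrow> (nat \<Rightarrow> 'a \<Rightarrow> real) \<Rightarrow> (nat \<Rightarrow> 'a \<Rightarrow> real)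
   \<Rightarrow> (nat \<Rightarrow> 'a \<Rightarrow> real) \<Rightarrow> nat \<Rightarrow> nat \<Rightarrow> nat \<Rightarrow> 'a \<Rightarrow> bool" where
  "B_stationary f g h G H ng nh m z \<longleftrightarrow>
     (\<forall>d\<in>tangent_cone (mpcc_feasible g h G H ng nh m) z. grad f z \<bullet> d \<ge> 0)"

definition piecewise_M_stationary ::
  "('a::euclidean_space \<Rightarrow> real) \<Rightarrow> (nat \<Rightarrow> 'a \<Rightarrow> real) \<Rightarrow> (nat \<Rightarrow> 'a \<Rightarrow> real) \<Rightarrow> (nat \<Rightarrow> 'a \<Rightarrow> real)
   \<Rightarrow> (nat \<Rightarrow> 'a \<Rightarrow> real) \<Rightarrow> nat \<Rightarrow> nat \<Rightarrow> nat \<Rightarrow> 'a \<Rightarrow> bool" where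
  "piecewise_M_stationary f g h G H ng nh m z \<longleftrightarrow>
     (\<forall>\<beta>1 \<beta>2. \<beta>1 \<union> \<beta>2 = idx_beta G H m z \<and> \<beta>1 \<inter> \<beta>2 = {} \<longrightarrow>
       (\<exists>lg lh lG lH :: nat \<Rightarrow> real.
          grad f z + (\<Sum>i<ng. lg i *\<^sub>R grad (g i) z) + (\<Sum>i<nh. lh i *\<^sub>R grad (h i) z)
            - (\<Sum>i\<in>idx_alpha G H m z \<union> idx_beta G H m z. lG i *\<^sub>R grad (G i) z)
            - (\<Sum>i\<in>idx_gamma G H m z \<union> idx_beta G H m z. lH i *\<^sub>R grad (H i) z) = 0 \<and>
          (\<forall>i<ng. lg i \<ge> 0 \<and> lg i * g i z = 0) \<and>
          (\<forall>i\<in>\<beta>1. lH i \<ge> 0) \<and>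
          (\<forall>i\<in>\<beta>2. lG i \<ge> 0) \<and>
          (\<forall>i\<in>idx_beta G H m z. (lG i \<ge> 0 \<and> lH i \<ge> 0) \<or> lG i * lH i = 0)))"

end

theory Submission
  imports Defs
begin

(* Every tangent direction d of the feasible set is a limit of difference quotients along
   feasible points, so it satisfies the linearized MPCC conditions: nonpositive derivatives
   of active inequalities, vanishing derivatives of equalities and of G on alpha, H on gamma,
   and on the biactive set beta both derivatives nonnegative with vanishing product.
   Given such a d, apply piecewise M-stationarity to the partition
   beta1 = {i in beta. grad G_i . d = 0}, beta2 = beta - beta1: pairing the stationarity
   equation with d writes grad f . d as a sum of nonnegative terms, because on beta1 the
   G-term vanishes while the H-multiplier is nonnegative, and on beta2 the H-term vanishes
   while the G-multiplier is nonnegative. *)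

lemma has_derivative_tangent_sequence:
  fixes \<phi> :: "'a::real_normed_vector \<Rightarrow> 'b::real_normed_vector"
  assumes der: "(\<phi> has_derivative F) (at z)" and zk: "zk \<longlonglongrightarrow> z"
    and dir: "(\<lambda>k. (1 / t k) *\<^sub>R (zk k - z)) \<longlonglongrightarrow> d"
  shows "(\<lambda>k. (1 / t k) *\<^sub>R (\<phi> (zk k) - \<phi> z)) \<longlonglongrightarrow> F d"
proof -
  define \<epsilon> where "\<epsilon> y = (\<phi> y - \<phi> z - F (y - z)) /\<^sub>R norm (y - z)" for y
  have lin: "linear F"
    using der has_derivative_linear by blast
  have "isCont \<epsilon> z"
    \<comment> \<open>division by zero makes \<open>\<epsilon> z = 0\<close>\<close>
    using der unfolding isCont_def \<epsilon>_def has_derivative_at_within by simp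
  then have "(\<lambda>k. \<epsilon> (zk k)) \<longlonglongrightarrow> 0"
    using zk isCont_tendsto_compose by (fastforce simp: \<epsilon>_def)
  then have "(\<lambda>k. norm ((1 / t k) *\<^sub>R (zk k - z)) * norm (\<epsilon> (zk k))) \<longlonglongrightarrow> norm d * 0"
    by (intro tendsto_mult tendsto_norm dir) (simp add: tendsto_norm_zero)
  moreover have "norm ((1 / t k) *\<^sub>R (norm (zk k - z) *\<^sub>R \<epsilon> (zk k)))
      = norm ((1 / t k) *\<^sub>R (zk k - z)) * norm (\<epsilon> (zk k))" for k
    by (simp only: norm_scaleR abs_norm_cancel mult.assoc)
  ultimately have "(\<lambda>k. norm ((1 / t k) *\<^sub>R (norm (zk k - z) *\<^sub>R \<epsilon> (zk k)))) \<longlonglongrightarrow> 0"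
    by simp
  then have rem: "(\<lambda>k. (1 / t k) *\<^sub>R (norm (zk k - z) *\<^sub>R \<epsilon> (zk k))) \<longlonglongrightarrow> 0"
    by (rule tendsto_norm_zero_cancel)
  have remainder_form: "\<phi> y - \<phi> z = F (y - z) + norm (y - z) *\<^sub>R \<epsilon> y" for y
    by (cases "y = z") (simp_all add: \<epsilon>_def linear_0[OF lin])
  have "(\<lambda>k. F ((1 / t k) *\<^sub>R (zk k - z)) + (1 / t k) *\<^sub>R (norm (zk k - z) *\<^sub>R \<epsilon> (zk k))) \<longlonglongrightarrow> F d + 0"
    using der has_derivative_bounded_linear bounded_linear.tendsto dir rem
    by (intro tendsto_add) blast+
  then show ?thesis
    by (simp add: remainder_form linear_scale[OF lin] scaleR_add_right)
qed

lemma has_derivative_grad: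
  assumes "\<phi> differentiable (at z)"
  shows "(\<phi> has_derivative (\<lambda>d. grad \<phi> z \<bullet> d)) (at z)"
proof -
  let ?F = "frechet_derivative \<phi> (at z)"
  have der: "(\<phi> has_derivative ?F) (at z)"
    using assms frechet_derivative_works by blast
  have "?F d = grad \<phi> z \<bullet> d" for d
  proof -
    have "?F d = ?F (\<Sum>b\<in>Basis. (d \<bullet> b) *\<^sub>R b)"
      by (simp add: euclidean_representation)
    also have "\<dots> = (\<Sum>b\<in>Basis. (d \<bullet> b) * ?F b)"
      using has_derivative_linear[OF der] by (simp add: linear_sum linear_scale)
    finally show ?thesis
      unfolding grad_def inner_sum_left by (simp add: inner_commute mult.commute)
  qed
  then show ?thesis
    using der by (metis (no_types, lifting) ext)
qed

lemma tangent_cone_difference_quotients: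
  fixes S :: "'a::euclidean_space set"
  assumes "d \<in> tangent_cone S z"
  obtains zk t where "\<forall>k. zk k \<in> S" "zk \<longlonglongrightarrow> z" "\<forall>k. t k > 0"
    "\<And>\<phi>. \<phi> differentiable (at z) \<Longrightarrow> (\<lambda>k. (\<phi> (zk k) - \<phi> z) / t k) \<longlonglongrightarrow> grad \<phi> z \<bullet> d"
proof -
  obtain zk t where zk: "\<forall>k. zk k \<in> S" "zk \<longlonglongrightarrow> z" "\<forall>k. t k > 0"
    and dir: "(\<lambda>k. (1 / t k) *\<^sub>R (zk k - z)) \<longlonglongrightarrow> d"
    using assms unfolding tangent_cone_def by blast
  have "(\<lambda>k. (\<phi> (zk k) - \<phi> z) / t k) \<longlonglongrightarrow> grad \<phi> z \<bullet> d" if "\<phi> differentiable (at z)" for \<phi>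
    using has_derivative_tangent_sequence[OF has_derivative_grad[OF that] zk(2) dir] by simp
  with zk that show thesis by blast
qed

lemma tangent_cone_grad_nonpos:
  assumes "\<phi> differentiable (at z)" "d \<in> tangent_cone S z"
    and "\<forall>\<^sub>F x in nhds z. x \<in> S \<longrightarrow> \<phi> x \<le> \<phi> z"
  shows "grad \<phi> z \<bullet> d \<le> 0"
proof -
  obtain zk t where zk: "\<forall>k. zk k \<in> S" "zk \<longlonglongrightarrow> z" "\<forall>k. t k > 0"
    and lim: "(\<lambda>k. (\<phi> (zk k) - \<phi> z) / t k) \<longlonglongrightarrow> grad \<phi> z \<bullet> d"
    using tangent_cone_difference_quotients[OF assms(2)] assms(1) by metis
  have "\<forall>\<^sub>F k in sequentially. \<phi> (zk k) \<le> \<phi> z"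
    using eventually_compose_filterlim[OF assms(3) zk(2)] zk(1) by simp
  then have "\<forall>\<^sub>F k in sequentially. (\<phi> (zk k) - \<phi> z) / t k \<le> 0"
    by eventually_elim (simp add: zk(3) divide_nonpos_pos)
  with lim show ?thesis
    by (simp add: tendsto_upperbound)
qed

lemma tangent_cone_grad_nonneg:
  assumes "\<phi> differentiable (at z)" "d \<in> tangent_cone S z"
    and "\<forall>\<^sub>F x in nhds z. x \<in> S \<longrightarrow> \<phi> z \<le> \<phi> x"
  shows "grad \<phi> z \<bullet> d \<ge> 0"
proof -
  obtain zk t where zk: "\<forall>k. zk k \<in> S" "zk \<longlonglongrightarrow> z" "\<forall>k. t k > 0"
    and lim: "(\<lambda>k. (\<phi> (zk k) - \<phi> z) / t k) \<longlonglongrightarrow> grad \<phi> z \<bullet> d"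
    using tangent_cone_difference_quotients[OF assms(2)] assms(1) by metis
  have "\<forall>\<^sub>F k in sequentially. \<phi> z \<le> \<phi> (zk k)"
    using eventually_compose_filterlim[OF assms(3) zk(2)] zk(1) by simp
  then have "\<forall>\<^sub>F k in sequentially. 0 \<le> (\<phi> (zk k) - \<phi> z) / t k"
    by eventually_elim (simp add: zk(3) less_imp_le)
  with lim show ?thesis
    by (simp add: tendsto_lowerbound)
qed

lemma tangent_cone_grad_eq_0:
  assumes "\<phi> differentiable (at z)" "d \<in> tangent_cone S z"
    and "\<forall>\<^sub>F x in nhds z. x \<in> S \<longrightarrow> \<phi> x = \<phi> z"
  shows "grad \<phi> z \<bullet> d = 0"
proof -
  have "\<forall>\<^sub>F x in nhds z. x \<in> S \<longrightarrow> \<phi> x \<le> \<phi> z" "\<forall>\<^sub>F x in nhds z. x \<in> S \<longrightarrow> \<phi> z \<le> \<phi> x"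
    using assms(3) by (auto elim: eventually_mono)
  then show ?thesis
    using tangent_cone_grad_nonpos[OF assms(1,2)] tangent_cone_grad_nonneg[OF assms(1,2)] by force
qed

lemma tangent_cone_grad_mult_eq_0:
  assumes "\<phi> differentiable (at z)" "\<psi> differentiable (at z)" "d \<in> tangent_cone S z"
    and "\<forall>x\<in>S. \<phi> x * \<psi> x = 0" "\<phi> z = 0" "\<psi> z = 0"
  shows "(grad \<phi> z \<bullet> d) * (grad \<psi> z \<bullet> d) = 0"
proof -
  obtain zk t where zk: "\<forall>k. zk k \<in> S"
    and lim: "\<And>\<phi>. \<phi> differentiable (at z) \<Longrightarrow> (\<lambda>k. (\<phi> (zk k) - \<phi> z) / t k) \<longlonglongrightarrow> grad \<phi> z \<bullet> d"
    using tangent_cone_difference_quotients[OF assms(3)] by metis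
  have "(\<lambda>k. ((\<phi> (zk k) - \<phi> z) / t k) * ((\<psi> (zk k) - \<psi> z) / t k))
      \<longlonglongrightarrow> (grad \<phi> z \<bullet> d) * (grad \<psi> z \<bullet> d)"
    using assms(1,2) by (intro tendsto_mult lim)
  moreover have "(\<lambda>k. ((\<phi> (zk k) - \<phi> z) / t k) * ((\<psi> (zk k) - \<psi> z) / t k)) = (\<lambda>k. 0)"
    using assms(4-6) zk by (auto simp: fun_eq_iff)
  ultimately show ?thesis
    by (metis LIMSEQ_const_iff)
qed

definition mpcc_linearized_cone ::
  "(nat \<Rightarrow> 'a::euclidean_space \<Rightarrow> real) \<Rightarrow> (nat \<Rightarrow> 'a \<Rightarrow> real) \<Rightarrow> (nat \<Rightarrow> 'a \<Rightarrow> real)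
   \<Rightarrow> (nat \<Rightarrow> 'a \<Rightarrow> real) \<Rightarrow> nat \<Rightarrow> nat \<Rightarrow> nat \<Rightarrow> 'a \<Rightarrow> 'a set" where
  "mpcc_linearized_cone g h G H ng nh m z = {d.
     (\<forall>i<ng. g i z = 0 \<longrightarrow> grad (g i) z \<bullet> d \<le> 0) \<and>
     (\<forall>i<nh. grad (h i) z \<bullet> d = 0) \<and>
     (\<forall>i\<in>idx_alpha G H m z. grad (G i) z \<bullet> d = 0) \<and>
     (\<forall>i\<in>idx_gamma G H m z. grad (H i) z \<bullet> d = 0) \<and>
     (\<forall>i\<in>idx_beta G H m z. grad (G i) z \<bullet> d \<ge> 0 \<and> grad (H i) z \<bullet> d \<ge> 0 \<and>
        (grad (G i) z \<bullet> d) * (grad (H i) z \<bullet> d) = 0)}"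

lemma tangent_cone_subset_mpcc_linearized_cone:
  fixes G H :: "nat \<Rightarrow> 'a::euclidean_space \<Rightarrow> real"
  assumes feasible: "z \<in> mpcc_feasible g h G H ng nh m"
    and diff_g: "\<And>i. i < ng \<Longrightarrow> g i differentiable (at z)"
    and diff_h: "\<And>i. i < nh \<Longrightarrow> h i differentiable (at z)"
    and diff_G: "\<And>i. i < m \<Longrightarrow> G i differentiable (at z)"
    and diff_H: "\<And>i. i < m \<Longrightarrow> H i differentiable (at z)"
  shows "tangent_cone (mpcc_feasible g h G H ng nh m) z \<subseteq> mpcc_linearized_cone g h G H ng nh m z"
proof
  let ?S = "mpcc_feasible g h G H ng nh m"
  fix d assume d: "d \<in> tangent_cone ?S z"
  have vanishing_partner: "grad \<phi> z \<bullet> d = 0"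
    if "\<phi> differentiable (at z)" "\<psi> differentiable (at z)" "\<phi> z = 0" "\<psi> z > 0"
      and "\<forall>x\<in>?S. \<phi> x * \<psi> x = 0" for \<phi> \<psi>
  proof -
    have "isCont \<psi> z"
      using that(2) differentiable_imp_continuous_within by blast
    then have "\<forall>\<^sub>F x in nhds z. \<psi> x > 0"
      using that(4) by (simp add: isCont_def tendsto_at_iff_tendsto_nhds order_tendstoD)
    then have "\<forall>\<^sub>F x in nhds z. x \<in> ?S \<longrightarrow> \<phi> x = \<phi> z"
      by eventually_elim (use that(3,5) in auto)
    then show ?thesis
      using tangent_cone_grad_eq_0 that(1) d by blast
  qed
  show "d \<in> mpcc_linearized_cone g h G H ng nh m z"
    unfolding mpcc_linearized_cone_def
  proof (intro CollectI conjI ballI allI impI)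
    fix i assume "i < ng" "g i z = 0"
    then show "grad (g i) z \<bullet> d \<le> 0"
      by (intro tangent_cone_grad_nonpos[OF diff_g d] always_eventually)
        (auto simp: mpcc_feasible_def)
  next
    fix i assume "i < nh"
    then show "grad (h i) z \<bullet> d = 0"
      using feasible
      by (intro tangent_cone_grad_eq_0[OF diff_h d] always_eventually)
        (auto simp: mpcc_feasible_def)
  next
    fix i assume "i \<in> idx_alpha G H m z"
    then show "grad (G i) z \<bullet> d = 0"
      by (intro vanishing_partner[of "G i" "H i"] diff_G diff_H)
        (auto simp: idx_alpha_def mpcc_feasible_def)
  next
    fix i assume "i \<in> idx_gamma G H m z"
    then show "grad (H i) z \<bullet> d = 0"
      by (intro vanishing_partner[of "H i" "G i"] diff_G diff_H)
        (auto simp: idx_gamma_def mpcc_feasible_def mult.commute)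
  next
    fix i assume "i \<in> idx_beta G H m z"
    then have i: "i < m" "G i z = 0" "H i z = 0"
      by (auto simp: idx_beta_def)
    then show "grad (G i) z \<bullet> d \<ge> 0" "grad (H i) z \<bullet> d \<ge> 0"
      by (intro tangent_cone_grad_nonneg[OF diff_G d] tangent_cone_grad_nonneg[OF diff_H d]
          always_eventually; auto simp: mpcc_feasible_def)+
    show "(grad (G i) z \<bullet> d) * (grad (H i) z \<bullet> d) = 0"
      using i by (intro tangent_cone_grad_mult_eq_0[OF diff_G diff_H d]) (auto simp: mpcc_feasible_def)
  qed
qed

lemma piecewise_M_stationary_imp_grad_nonneg:
  assumes stat: "piecewise_M_stationary f g h G H ng nh m z"
    and d: "d \<in> mpcc_linearized_cone g h G H ng nh m z"
  shows "grad f z \<bullet> d \<ge> 0"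
proof -
  let ?\<alpha> = "idx_alpha G H m z" and ?\<beta> = "idx_beta G H m z" and ?\<gamma> = "idx_gamma G H m z"
  define D where "D \<phi> = grad \<phi> z \<bullet> d" for \<phi> :: "'a \<Rightarrow> real"
  have lin_g: "D (g i) \<le> 0" if "i < ng" "g i z = 0" for i
    using d that unfolding mpcc_linearized_cone_def D_def by blast
  have lin_h: "D (h i) = 0" if "i < nh" for i
    using d that unfolding mpcc_linearized_cone_def D_def by blast
  have lin_G: "D (G i) = 0" if "i \<in> ?\<alpha>" for i
    using d that unfolding mpcc_linearized_cone_def D_def by blast
  have lin_H: "D (H i) = 0" if "i \<in> ?\<gamma>" for i
    using d that unfolding mpcc_linearized_cone_def D_def by blast
  have lin_\<beta>: "D (G i) \<ge> 0" "D (H i) \<ge> 0" "D (G i) * D (H i) = 0" if "i \<in> ?\<beta>" for i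
    using d that unfolding mpcc_linearized_cone_def D_def by blast+
  define \<beta>1 where "\<beta>1 = {i \<in> ?\<beta>. D (G i) = 0}"
  have "\<beta>1 \<union> (?\<beta> - \<beta>1) = ?\<beta> \<and> \<beta>1 \<inter> (?\<beta> - \<beta>1) = {}"
    unfolding \<beta>1_def by auto
  note multipliers = stat[unfolded piecewise_M_stationary_def, rule_format, OF this]
  obtain lg lh lG lH :: "nat \<Rightarrow> real" where
    eq: "grad f z + (\<Sum>i<ng. lg i *\<^sub>R grad (g i) z) + (\<Sum>i<nh. lh i *\<^sub>R grad (h i) z)
          - (\<Sum>i\<in>?\<alpha> \<union> ?\<beta>. lG i *\<^sub>R grad (G i) z) - (\<Sum>i\<in>?\<gamma> \<union> ?\<beta>. lH i *\<^sub>R grad (H i) z) = 0"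
    and lg: "\<forall>i<ng. lg i \<ge> 0 \<and> lg i * g i z = 0"
    and lH: "\<forall>i\<in>\<beta>1. lH i \<ge> 0" and lG: "\<forall>i\<in>?\<beta> - \<beta>1. lG i \<ge> 0"
    using multipliers by (elim exE conjE) (rule that)
  have "D f + (\<Sum>i<ng. lg i * D (g i)) + (\<Sum>i<nh. lh i * D (h i))
          - (\<Sum>i\<in>?\<alpha> \<union> ?\<beta>. lG i * D (G i)) - (\<Sum>i\<in>?\<gamma> \<union> ?\<beta>. lH i * D (H i)) = 0"
    using arg_cong[OF eq, of "\<lambda>v. v \<bullet> d"]
    by (simp add: D_def inner_diff_left inner_add_left inner_sum_left)
  moreover have "(\<Sum>i<ng. lg i * D (g i)) \<le> 0"
  proof (rule sum_nonpos)
    fix i assume "i \<in> {..<ng}"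
    then show "lg i * D (g i) \<le> 0"
      using lg lin_g by (cases "g i z = 0") (auto simp: mult_nonneg_nonpos)
  qed
  moreover have "(\<Sum>i<nh. lh i * D (h i)) = 0"
    using lin_h by simp
  moreover have "(\<Sum>i\<in>?\<alpha> \<union> ?\<beta>. lG i * D (G i)) \<ge> 0"
  proof (rule sum_nonneg)
    fix i assume "i \<in> ?\<alpha> \<union> ?\<beta>"
    then show "0 \<le> lG i * D (G i)"
      using lin_G lin_\<beta>(1) lG by (cases "i \<in> \<beta>1") (auto simp: \<beta>1_def)
  qed
  moreover have "(\<Sum>i\<in>?\<gamma> \<union> ?\<beta>. lH i * D (H i)) \<ge> 0"
  proof (rule sum_nonneg)
    fix i assume "i \<in> ?\<gamma> \<union> ?\<beta>"
    then consider "i \<in> ?\<gamma>" | "i \<in> \<beta>1" | "i \<in> ?\<beta>" "D (G i) \<noteq> 0"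
      unfolding \<beta>1_def by blast
    then show "0 \<le> lH i * D (H i)"
    proof cases
      case 3
      then show ?thesis
        using lin_\<beta>(3)[OF 3(1)] by simp
    qed (use lin_H lin_\<beta>(2) lH \<beta>1_def in auto)
  qed
  ultimately show ?thesis
    unfolding D_def by linarith
qed

theorem theorem2p3:
  fixes f :: "'a::euclidean_space \<Rightarrow> real"
    and g h G H :: "nat \<Rightarrow> 'a \<Rightarrow> real"
    and ng nh m :: nat
    and z :: 'a
  assumes "\<And>x. f differentiable (at x)"
    and "\<And>i x. i < ng \<Longrightarrow> g i differentiable (at x)"
    and "\<And>i x. i < nh \<Longrightarrow> h i differentiable (at x)"
    and "\<And>i x. i < m \<Longrightarrow> G i differentiable (at x)"
    and "\<And>i x. i < m \<Longrightarrow> H i differentiable (at x)"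
    and "z \<in> mpcc_feasible g h G H ng nh m"
    and "piecewise_M_stationary f g h G H ng nh m z"
  shows "B_stationary f g h G H ng nh m z"
  unfolding B_stationary_def
  using tangent_cone_subset_mpcc_linearized_cone[OF assms(6) assms(2-5)]
    piecewise_M_stationary_imp_grad_nonneg[OF assms(7)]
  by blast

end
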